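(* For every cylindric partition $\alpha$ on $\mathcal C_{k,n}$ and variable set $\mathbf x$, \[ \sum_{\substack{\mu\in\operatorname{Cylpar};\\ \mu\subseteq\alpha}} s_{\alpha/\mu}(\mathbf x)=\sum_{\substack{\lambda\in\operatorname{Cylpar};\\ \alpha\subseteq\lambda}} s_{\lambda/\alpha}(\mathbf x). \]
   Context: Fix integers $n>k\ge1$. A cylindric partition is a weakly decreasing integer sequence $(\lambda_m)_{m\in\mathbb Z}$ with $\lambda_m=\lambda_{m+k}+n-k$; $\operatorname{Cylpar}$ is the set of them. A point $(x,y)\in\mathbb Z^2$ lies in $\lambda$ if $y\le\lambda_x$. Boxes are classes of points modulo translation by multiples of $(-k,n-k)$; $\pi$ the projection; a box lies in $\lambda$ iff its representatives do. $\mu\subseteq\lambda$ means $\mu_m\le\lambda_m$ for all $m$; boxes of $\lambda/\mu$ are the finitely many boxes in $\lambda$ not in $\mu$. For a totally ordered alphabet $A$, a semistandard cylindric tableau of shape $\lambda/\mu$ is a map $R$ from the boxes of $\lambda/\mu$ to $A$ with $R(\pi(x,y_1))\le R(\pi(x,y_2))$ whenever $(x,y_1),(x,y_2)$ lie in $\lambda$ but not $\mu$ and $y_1<y_2$, and $R(\pi(x_1,y))<R(\pi(x_2,y))$ whenever $(x_1,y),(x_2,y)$ lie in $\lambda$ but not $\mu$ and $x_1<x_2$. For indeterminates $\mathbf x=(x_a)_{a\in A}$, $s_{\lambda/\mu}(\mathbf x)=\sum_R\prod_B x_{R(B)}$, the sum over all such tableaux $R$ of shape $\lambda/\mu$ and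 the product over the boxes $B$ of $\lambda/\mu$. The identity is one of formal power series. *)

theory Defs
  imports Main "HOL-Library.Multiset" "HOL-Library.FuncSet"
begin

definition cylpar :: "nat \<Rightarrow> nat \<Rightarrow> (int \<Rightarrow> int) \<Rightarrow> bool" where
  "cylpar k n lam \<longleftrightarrow> (\<forall>m. lam (m + 1) \<le> lam m) \<and>
                         (\<forall>m. lam m = lam (m + int k) + (int n - int k))"

definition in_part :: "(int \<Rightarrow> int) \<Rightarrow> int \<times> int \<Rightarrow> bool" where
  "in_part lam p \<longleftrightarrow> snd p \<le> lam (fst p)"

definition subpart :: "(int \<Rightarrow> int) \<Rightarrow> (int \<Rightarrow> int) \<Rightarrow> bool" where
  "subpart mu lam \<longleftrightarrow> (\<forall>m. mu m \<le> lam m)"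

text \<open>Boxes: classes of points modulo translation by multiples of (-k, n-k); pi is the projection.\<close>
definition box :: "nat \<Rightarrow> nat \<Rightarrow> int \<times> int \<Rightarrow> (int \<times> int) set" where
  "box k n p = {(fst p - j * int k, snd p + j * (int n - int k)) | j. True}"

definition skew_points :: "(int \<Rightarrow> int) \<Rightarrow> (int \<Rightarrow> int) \<Rightarrow> (int \<times> int) set" where
  "skew_points lam mu = {p. in_part lam p \<and> \<not> in_part mu p}"

definition skew_boxes :: "nat \<Rightarrow> nat \<Rightarrow> (int \<Rightarrow> int) \<Rightarrow> (int \<Rightarrow> int) \<Rightarrow> (int \<times> int) set set" where
  "skew_boxes k n lam mu = box k n ` skew_points lam mu"

definition ssct :: "nat \<Rightarrow> nat \<Rightarrow> (int \<Rightarrow> int) \<Rightarrow> (int \<Rightarrow> int) \<Rightarrow> ((int \<times> int) set \<Rightarrow> 'a::linorder) \<Rightarrow> bool" where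
  "ssct k n lam mu R \<longleftrightarrow>
     R \<in> extensional (skew_boxes k n lam mu) \<and>
     (\<forall>x y1 y2. (x, y1) \<in> skew_points lam mu \<and> (x, y2) \<in> skew_points lam mu \<and> y1 < y2
        \<longrightarrow> R (box k n (x, y1)) \<le> R (box k n (x, y2))) \<and>
     (\<forall>x1 x2 y. (x1, y) \<in> skew_points lam mu \<and> (x2, y) \<in> skew_points lam mu \<and> x1 < x2
        \<longrightarrow> R (box k n (x1, y)) < R (box k n (x2, y)))"

text \<open>The monomial prod_B x_{R(B)}, represented as the multiset of entries.\<close>
definition tab_content :: "nat \<Rightarrow> nat \<Rightarrow> (int \<Rightarrow> int) \<Rightarrow> (int \<Rightarrow> int) \<Rightarrow> ((int \<times> int) set \<Rightarrow> 'a) \<Rightarrow> 'a multiset" where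
  "tab_content k n lam mu R = image_mset R (mset_set (skew_boxes k n lam mu))"

text \<open>Formal power series in commuting variables (x_a)_{a::'a} with nat coefficients,
  represented as coefficient functions on monomials (finite multisets of variables).\<close>
type_synonym 'a fps_mv = "'a multiset \<Rightarrow> nat"

definition skew_schur :: "nat \<Rightarrow> nat \<Rightarrow> (int \<Rightarrow> int) \<Rightarrow> (int \<Rightarrow> int) \<Rightarrow> ('a::linorder) fps_mv" where
  "skew_schur k n lam mu = (\<lambda>m. card {R. ssct k n lam mu R \<and> tab_content k n lam mu R = m})"

definition fsummable :: "'i set \<Rightarrow> ('i \<Rightarrow> 'a fps_mv) \<Rightarrow> bool" where
  "fsummable I F \<longleftrightarrow> (\<forall>m. finite {i \<in> I. F i m \<noteq> 0})"

definition fsum :: "'i set \<Rightarrow> ('i \<Rightarrow> 'a fps_mv) \<Rightarrow> 'a fps_mv" where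
  "fsum I F = (\<lambda>m. \<Sum>i \<in> {i \<in> I. F i m \<noteq> 0}. F i m)"

end

theory Submission
  imports Defs
begin

text \<open>
  The boxes of a semistandard cylindric tableau holding a given letter form a horizontal strip, so a
  tableau of shape \<open>\<lambda>/\<mu>\<close> with content \<open>M\<close> is a chain of cylindric partitions from \<open>\<mu>\<close> to \<open>\<lambda>\<close> in which
  consecutive shapes differ by horizontal strips whose sizes are the multiplicities \<open>c\<^sub>1, \<dots>, c\<^sub>r\<close> of
  the letters of \<open>M\<close> in increasing order. The coefficient of the monomial of \<open>M\<close> on the left therefore
  counts the chains descending from \<open>\<alpha>\<close> by strips of sizes \<open>c\<^sub>r, \<dots>, c\<^sub>1\<close>, and on the right the chains
  ascending from \<open>\<alpha>\<close> by strips of sizes \<open>c\<^sub>1, \<dots>, c\<^sub>r\<close>. Removing a strip and then adding one can be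
  traded bijectively, column by column, for adding first and removing afterwards, and every cylindric
  partition has as many strips of a given size below it as above it. Using the first fact to move each
  addition to the front and the second at the end of the chain turns one count into the other.
\<close>

lemma shift_iterate:
  fixes f :: "int \<Rightarrow> 'a::ring_1"
  assumes "\<And>x. f (x + p) = f x + c"
  shows "f (x + j * p) = f x + of_int j * c"
proof (induction j rule: int_induct[of _ 0])
  case (step1 i)
  then show ?case using assms[of "x + i * p"] by (simp add: algebra_simps)
next
  case (step2 i)
  then show ?case using assms[of "x + (i - 1) * p"] by (simp add: algebra_simps)
qed simp

lemma sum_periodic_shift:
  fixes g :: "int \<Rightarrow> 'a::ring_1"
  assumes "p > 0" and per: "\<And>x. g (x + p) = g x"
  shows "(\<Sum>x\<in>{0..<p}. g (x + j)) = (\<Sum>x\<in>{0..<p}. g x)"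
proof -
  have mod: "g y = g (y mod p)" for y
    using shift_iterate[of g p 0 "y mod p" "y div p"] per by simp
  have "(\<Sum>x\<in>{0..<p}. g (x + j)) = (\<Sum>x\<in>{0..<p}. g ((x + j) mod p))"
    by (simp flip: mod)
  also have "\<dots> = (\<Sum>x\<in>{0..<p}. g x)"
    by (rule sum.reindex_bij_witness[where i = "\<lambda>y. (y - j) mod p" and j = "\<lambda>x. (x + j) mod p"])
       (use \<open>p > 0\<close> in \<open>auto simp: mod_simps\<close>)
  finally show ?thesis .
qed

definition threshold :: "int \<Rightarrow> int \<Rightarrow> (int \<Rightarrow> bool) \<Rightarrow> int" where
  "threshold lo hi Q = Max (insert lo {y \<in> {lo<..hi}. Q y})"

lemma threshold_eqI:
  assumes "lo \<le> t" "t \<le> hi" and Q: "\<And>y. lo < y \<Longrightarrow> y \<le> hi \<Longrightarrow> Q y \<longleftrightarrow> y \<le> t"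
  shows "threshold lo hi Q = t"
proof -
  have "insert lo {y \<in> {lo<..hi}. Q y} = {lo..t}"
  proof (intro set_eqI iffI)
    fix y assume "y \<in> insert lo {y \<in> {lo<..hi}. Q y}"
    then show "y \<in> {lo..t}" using Q[of y] assms(1) by auto
  next
    fix y assume "y \<in> {lo..t}"
    then show "y \<in> insert lo {y \<in> {lo<..hi}. Q y}" using Q[of y] assms(2) by auto
  qed
  moreover have "Max {lo..t} = t" using assms(1) by (intro Max_eqI) auto
  ultimately show ?thesis by (simp add: threshold_def)
qed

lemma threshold_spec:
  assumes "lo \<le> hi"
    and down: "\<And>y y'. lo < y \<Longrightarrow> y \<le> y' \<Longrightarrow> y' \<le> hi \<Longrightarrow> Q y' \<Longrightarrow> Q y"
  shows "lo \<le> threshold lo hi Q" "threshold lo hi Q \<le> hi"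
    and "lo < y \<Longrightarrow> y \<le> hi \<Longrightarrow> Q y \<longleftrightarrow> y \<le> threshold lo hi Q"
proof -
  let ?S = "insert lo {y \<in> {lo<..hi}. Q y}"
  have "?S \<subseteq> {lo..hi}" using assms(1) by auto
  then have fin: "finite ?S" by (rule finite_subset) simp
  have t: "threshold lo hi Q \<in> ?S" unfolding threshold_def using fin by (rule Max_in) simp
  have ub: "y \<le> threshold lo hi Q" if "y \<in> ?S" for y
    unfolding threshold_def using fin that by (rule Max_ge)
  show "lo \<le> threshold lo hi Q" by (rule ub) simp
  show "threshold lo hi Q \<le> hi" using t assms(1) by auto
  assume y: "lo < y" "y \<le> hi"
  show "Q y \<longleftrightarrow> y \<le> threshold lo hi Q"
  proof
    assume "Q y" then show "y \<le> threshold lo hi Q" using y by (intro ub) simp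
  next
    assume "y \<le> threshold lo hi Q"
    with t y have "lo < threshold lo hi Q" "threshold lo hi Q \<le> hi" "Q (threshold lo hi Q)" by auto
    then show "Q y" using down[OF y(1) \<open>y \<le> threshold lo hi Q\<close>] by simp
  qed
qed

definition down_closed :: "('a::order \<Rightarrow> bool) \<Rightarrow> bool" where
  "down_closed P \<longleftrightarrow> (\<forall>u w. w \<le> u \<longrightarrow> P u \<longrightarrow> P w)"

lemma filter_mset_sum_partition:
  assumes "\<forall>a\<in>#A. P a" and "\<forall>a\<in>#B. \<not> P a"
  shows "filter_mset P (A + B) = A" and "filter_mset (\<lambda>a. \<not> P a) (A + B) = B"
proof -
  have "filter_mset P A = A" "filter_mset (\<lambda>a. \<not> P a) B = B"
    using assms by (simp_all add: filter_mset_eq_conv)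
  then show "filter_mset P (A + B) = A" and "filter_mset (\<lambda>a. \<not> P a) (A + B) = B"
    using assms by simp_all
qed

lemma subpart_refl: "subpart l l"
  by (simp add: subpart_def)

lemma subpart_trans: "subpart l m \<Longrightarrow> subpart m p \<Longrightarrow> subpart l p"
  unfolding subpart_def by (meson order_trans)

section \<open>Cylindric partitions and their boxes\<close>

locale cylindric =
  fixes k n :: nat
  assumes k_pos: "0 < k"
begin

abbreviation nk :: int where "nk \<equiv> int n - int k"

lemma cylpar_period: "cylpar k n l \<Longrightarrow> l (x + int k) = l x - nk"
  unfolding cylpar_def by (metis add_diff_cancel_right')

lemma cylpar_step: "cylpar k n l \<Longrightarrow> l (x + 1) \<le> l x"
  unfolding cylpar_def by blast

lemma cylpar_shift:
  assumes "cylpar k n l"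
  shows "l (x + j * int k) = l x - j * nk"
  using shift_iterate[of l "int k" "- nk" x j] cylpar_period[OF assms] by (simp add: algebra_simps)

lemma cylpar_antimono:
  assumes "cylpar k n l" and "x \<le> x'"
  shows "l x' \<le> l x"
proof -
  have "l (x + int j) \<le> l x" for j
  proof (induction j)
    case (Suc j)
    have "x + int (Suc j) = (x + int j) + 1" by simp
    moreover have "l ((x + int j) + 1) \<le> l (x + int j)" using cylpar_step[OF assms(1)] .
    ultimately show ?case using Suc.IH by (metis order_trans)
  qed simp
  from this[of "nat (x' - x)"] show ?thesis using assms(2) by simp
qed

lemma cylparI:
  "(\<And>x. l (x + 1) \<le> l x) \<Longrightarrow> (\<And>x. l (x + int k) = l x - nk) \<Longrightarrow> cylpar k n l"
  unfolding cylpar_def by (metis add_diff_cancel_left' diff_add_cancel diff_diff_eq2)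

lemma cylpar_eqI:
  assumes "cylpar k n l" "cylpar k n l'" and "\<And>x. 0 \<le> x \<Longrightarrow> x < int k \<Longrightarrow> l x = l' x"
  shows "l = l'"
proof
  fix x
  have "l (x mod int k) = l' (x mod int k)" using assms(3) k_pos by simp
  then show "l x = l' x"
    using cylpar_shift[OF assms(1), of "x mod int k" "x div int k"]
      cylpar_shift[OF assms(2), of "x mod int k" "x div int k"] by simp
qed

lemma finite_cylpar_bounded:
  "finite {v. cylpar k n v \<and> (\<forall>x\<in>{0..<int k}. lo x \<le> v x \<and> v x \<le> hi x)}" (is "finite ?F")
proof (rule finite_imageD)
  show "inj_on (\<lambda>v. restrict v {0..<int k}) ?F"
  proof (rule inj_onI)
    fix v w assume "v \<in> ?F" "w \<in> ?F" and eq: "restrict v {0..<int k} = restrict w {0..<int k}"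
    show "v = w"
    proof (rule cylpar_eqI)
      fix x :: int assume "0 \<le> x" "x < int k"
      then show "v x = w x" using fun_cong[OF eq, of x] by simp
    qed (use \<open>v \<in> ?F\<close> \<open>w \<in> ?F\<close> in auto)
  qed
  have "(\<lambda>v. restrict v {0..<int k}) ` ?F \<subseteq> PiE {0..<int k} (\<lambda>x. {lo x..hi x})" by auto
  then show "finite ((\<lambda>v. restrict v {0..<int k}) ` ?F)"
    by (rule finite_subset) (intro finite_PiE; simp)
qed

lemma mem_box: "q \<in> box k n p \<longleftrightarrow> (\<exists>j. q = (fst p - j * int k, snd p + j * nk))"
  unfolding box_def by auto

lemma box_eq:
  assumes "q \<in> box k n p"
  shows "box k n q = box k n p"
proof -
  obtain j where j: "q = (fst p - j * int k, snd p + j * nk)" using assms mem_box by blast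
  have "r \<in> box k n q \<longleftrightarrow> r \<in> box k n p" for r
  proof
    assume "r \<in> box k n q"
    then obtain i where "r = (fst q - i * int k, snd q + i * nk)" using mem_box by blast
    then show "r \<in> box k n p" using j by (auto simp: mem_box algebra_simps intro!: exI[of _ "i + j"])
  next
    assume "r \<in> box k n p"
    then obtain i where "r = (fst p - i * int k, snd p + i * nk)" using mem_box by blast
    then show "r \<in> box k n q" using j by (auto simp: mem_box algebra_simps intro!: exI[of _ "i - j"])
  qed
  then show ?thesis by blast
qed

lemma box_self: "p \<in> box k n p"
  unfolding mem_box by (auto intro: exI[of _ 0])

lemma box_eq_iff: "box k n p = box k n q \<longleftrightarrow> q \<in> box k n p"
  using box_eq box_self by metis

lemma box_shift_column: "box k n (x + int k, y) = box k n (x, y + nk)"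
  by (rule box_eq) (auto simp: mem_box intro: exI[of _ "-1"])

lemma box_column_mod: "(x mod int k, y + (x div int k) * nk) \<in> box k n (x, y)"
  unfolding mem_box by (auto simp: minus_div_mult_eq_mod intro!: exI[of _ "x div int k"])

lemma inj_on_box_fundamental_domain: "inj_on (box k n) ({0..<int k} \<times> UNIV)"
proof (rule inj_onI)
  fix p q :: "int \<times> int"
  assume p: "p \<in> {0..<int k} \<times> UNIV" and q: "q \<in> {0..<int k} \<times> UNIV" and "box k n p = box k n q"
  then obtain j where j: "q = (fst p - j * int k, snd p + j * nk)" by (auto simp: box_eq_iff mem_box)
  have "fst q = fst p - j * int k" using j by simp
  moreover have "0 \<le> fst p" "fst p < int k" "0 \<le> fst q" "fst q < int k" using p q by auto
  ultimately have "j * int k < int k" "- int k < j * int k" by linarith+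
  then have "j * int k < 1 * int k" "(- 1) * int k < j * int k" by simp_all
  moreover have "int k > 0" using k_pos by simp
  ultimately have "j < 1" "- 1 < j" by (simp_all only: mult_less_cancel_right_pos)
  then have "j = 0" by simp
  with j show "p = q" by (cases p) simp
qed

lemma mem_skew_points: "(x, y) \<in> skew_points l m \<longleftrightarrow> m x < y \<and> y \<le> l x"
  unfolding skew_points_def in_part_def by auto

lemma skew_points_box_closed:
  assumes "cylpar k n l" "cylpar k n m" and "q \<in> box k n p"
  shows "q \<in> skew_points l m \<longleftrightarrow> p \<in> skew_points l m"
proof -
  obtain j where "q = (fst p - j * int k, snd p + j * nk)" using assms(3) mem_box by blast
  then show ?thesis
    using cylpar_shift[OF assms(1), of "fst p - j * int k" j] cylpar_shift[OF assms(2), of "fst p - j * int k" j]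
    by (cases p) (auto simp: mem_skew_points)
qed

lemma box_in_skew_boxes_iff:
  assumes "cylpar k n l" "cylpar k n m"
  shows "box k n p \<in> skew_boxes k n l m \<longleftrightarrow> p \<in> skew_points l m"
  unfolding skew_boxes_def
  using skew_points_box_closed[OF assms] box_eq_iff by blast

lemma skew_boxes_eq_image:
  assumes "cylpar k n l" "cylpar k n m"
  shows "skew_boxes k n l m = box k n ` (SIGMA x:{0..<int k}. {m x<..l x})"
proof (intro equalityI subsetI)
  fix B assume "B \<in> skew_boxes k n l m"
  then obtain x y where B: "B = box k n (x, y)" and xy: "(x, y) \<in> skew_points l m"
    unfolding skew_boxes_def by auto
  let ?q = "(x mod int k, y + (x div int k) * nk)"
  have "?q \<in> skew_points l m" using skew_points_box_closed[OF assms box_column_mod] xy by blast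
  moreover have "B = box k n ?q" using B box_eq[OF box_column_mod] by simp
  ultimately show "B \<in> box k n ` (SIGMA x:{0..<int k}. {m x<..l x})"
    using k_pos by (auto simp: mem_skew_points)
qed (auto simp: skew_boxes_def mem_skew_points)

lemma finite_skew_boxes: "cylpar k n l \<Longrightarrow> cylpar k n m \<Longrightarrow> finite (skew_boxes k n l m)"
  by (simp add: skew_boxes_eq_image)

definition skew_size :: "(int \<Rightarrow> int) \<Rightarrow> (int \<Rightarrow> int) \<Rightarrow> int" where
  "skew_size l m = (\<Sum>x\<in>{0..<int k}. l x - m x)"

lemma card_skew_boxes:
  assumes "cylpar k n l" "cylpar k n m" "subpart m l"
  shows "int (card (skew_boxes k n l m)) = skew_size l m"
proof -
  have "inj_on (box k n) (SIGMA x:{0..<int k}. {m x<..l x})"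
    by (rule inj_on_subset[OF inj_on_box_fundamental_domain]) auto
  then have "int (card (skew_boxes k n l m)) = int (\<Sum>x\<in>{0..<int k}. card {m x<..l x})"
    by (simp add: skew_boxes_eq_image[OF assms(1,2)] card_image card_SigmaI)
  also have "\<dots> = skew_size l m"
    unfolding skew_size_def of_nat_sum using assms(3) by (intro sum.cong) (auto simp: subpart_def)
  finally show ?thesis .
qed

section \<open>Tableaux\<close>

lemma tab_content_mem:
  assumes "cylpar k n l" "cylpar k n m" and "B \<in> skew_boxes k n l m"
  shows "R B \<in># tab_content k n l m R"
  using assms finite_skew_boxes by (simp add: tab_content_def)

definition tableaux :: "(int \<Rightarrow> int) \<Rightarrow> (int \<Rightarrow> int) \<Rightarrow> 'a::linorder multiset \<Rightarrow> ((int \<times> int) set \<Rightarrow> 'a) set" where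
  "tableaux l m M = {R. ssct k n l m R \<and> tab_content k n l m R = M}"

lemma skew_schur_eq_card: "skew_schur k n l m M = card (tableaux l m M)"
  by (simp add: skew_schur_def tableaux_def)

lemma finite_tableaux:
  assumes "cylpar k n l" "cylpar k n m"
  shows "finite (tableaux l m M)"
proof (rule finite_subset)
  show "tableaux l m M \<subseteq> PiE (skew_boxes k n l m) (\<lambda>_. set_mset M)"
    using tab_content_mem[OF assms] by (auto simp: tableaux_def ssct_def PiE_def)
  show "finite (PiE (skew_boxes k n l m) (\<lambda>_. set_mset M))"
    using finite_skew_boxes[OF assms] by (intro finite_PiE) auto
qed

lemma tab_content_cong:
  assumes "cylpar k n l" "cylpar k n m" "\<And>B. B \<in> skew_boxes k n l m \<Longrightarrow> R B = R' B"
  shows "tab_content k n l m R = tab_content k n l m R'"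
  unfolding tab_content_def using assms finite_skew_boxes by (intro image_mset_cong) simp

lemma tab_content_restrict:
  "cylpar k n l \<Longrightarrow> cylpar k n m \<Longrightarrow> tab_content k n l m (restrict R (skew_boxes k n l m)) = tab_content k n l m R"
  by (rule tab_content_cong) simp_all

lemma tab_content_all:
  assumes "cylpar k n l" "cylpar k n m"
  shows "(\<forall>a\<in>#tab_content k n l m R. Q a) \<longleftrightarrow> (\<forall>p\<in>skew_points l m. Q (R (box k n p)))"
  using finite_skew_boxes[OF assms] by (simp add: tab_content_def skew_boxes_def)

lemma ssct_restrict:
  assumes "cylpar k n l'" "cylpar k n m'" "skew_points l' m' \<subseteq> skew_points l m" "ssct k n l m R"
  shows "ssct k n l' m' (restrict R (skew_boxes k n l' m'))"
proof -
  have R: "restrict R (skew_boxes k n l' m') (box k n p) = R (box k n p)" if "p \<in> skew_points l' m'" for p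
    using that box_in_skew_boxes_iff[OF assms(1,2)] by simp
  show ?thesis
    using assms(4) unfolding ssct_def
  proof (intro conjI allI impI; elim conjE)
    fix x y1 y2 assume "(x, y1) \<in> skew_points l' m'" "(x, y2) \<in> skew_points l' m'" "y1 < y2"
      and "\<forall>x y1 y2. (x, y1) \<in> skew_points l m \<and> (x, y2) \<in> skew_points l m \<and> y1 < y2
        \<longrightarrow> R (box k n (x, y1)) \<le> R (box k n (x, y2))"
    moreover have "(x, y1) \<in> skew_points l m" "(x, y2) \<in> skew_points l m"
      using calculation(1,2) assms(3) by auto
    ultimately show "restrict R (skew_boxes k n l' m') (box k n (x, y1)) \<le> restrict R (skew_boxes k n l' m') (box k n (x, y2))"
      using R by simp
  next
    fix x1 x2 y assume "(x1, y) \<in> skew_points l' m'" "(x2, y) \<in> skew_points l' m'" "x1 < x2"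
      and "\<forall>x1 x2 y. (x1, y) \<in> skew_points l m \<and> (x2, y) \<in> skew_points l m \<and> x1 < x2
        \<longrightarrow> R (box k n (x1, y)) < R (box k n (x2, y))"
    moreover have "(x1, y) \<in> skew_points l m" "(x2, y) \<in> skew_points l m"
      using calculation(1,2) assms(3) by auto
    ultimately show "restrict R (skew_boxes k n l' m') (box k n (x1, y)) < restrict R (skew_boxes k n l' m') (box k n (x2, y))"
      using R by simp
  qed simp
qed

definition interlaces :: "(int \<Rightarrow> int) \<Rightarrow> (int \<Rightarrow> int) \<Rightarrow> bool" where
  "interlaces l v \<longleftrightarrow> (\<forall>x. l (x + 1) \<le> v x \<and> v x \<le> l x)"

definition horizontal_strip :: "(int \<Rightarrow> int) \<Rightarrow> (int \<Rightarrow> int) \<Rightarrow> nat \<Rightarrow> bool" where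
  "horizontal_strip l v c \<longleftrightarrow> interlaces l v \<and> skew_size l v = int c"

lemma interlaces_iff_one_box_per_row:
  assumes "cylpar k n l" "cylpar k n v" "subpart v l"
  shows "interlaces l v \<longleftrightarrow>
    (\<forall>x1 x2 y. (x1, y) \<in> skew_points l v \<longrightarrow> (x2, y) \<in> skew_points l v \<longrightarrow> x2 \<le> x1)"
proof
  assume il: "interlaces l v"
  show "\<forall>x1 x2 y. (x1, y) \<in> skew_points l v \<longrightarrow> (x2, y) \<in> skew_points l v \<longrightarrow> x2 \<le> x1"
  proof (intro allI impI, rule ccontr)
    fix x1 x2 y assume "(x1, y) \<in> skew_points l v" "(x2, y) \<in> skew_points l v" "\<not> x2 \<le> x1"
    moreover have "l x2 \<le> l (x1 + 1)" using cylpar_antimono[OF assms(1)] \<open>\<not> x2 \<le> x1\<close> by simp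
    moreover have "l (x1 + 1) \<le> v x1" using il by (simp add: interlaces_def)
    ultimately show False by (simp add: mem_skew_points)
  qed
next
  assume rows: "\<forall>x1 x2 y. (x1, y) \<in> skew_points l v \<longrightarrow> (x2, y) \<in> skew_points l v \<longrightarrow> x2 \<le> x1"
  have "l (x + 1) \<le> v x" for x
  proof (rule ccontr)
    assume "\<not> l (x + 1) \<le> v x"
    moreover have "l (x + 1) \<le> l x" "v (x + 1) \<le> v x" using assms(1,2) by (auto intro: cylpar_step)
    ultimately have "(x, l (x + 1)) \<in> skew_points l v" "(x + 1, l (x + 1)) \<in> skew_points l v"
      by (auto simp: mem_skew_points)
    then show False using rows by fastforce
  qed
  then show "interlaces l v" using assms(3) by (simp add: interlaces_def subpart_def)
qed

lemma tableaux_replicate: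
  assumes "cylpar k n l" "cylpar k n v" "subpart v l"
  shows "tableaux l v (replicate_mset c a) =
    (if horizontal_strip l v c then {restrict (\<lambda>_. a) (skew_boxes k n l v)} else {})"
    (is "?T = _")
proof -
  let ?R0 = "restrict (\<lambda>_. a) (skew_boxes k n l v)"
  have "R = ?R0" if "R \<in> ?T" for R
  proof
    fix B show "R B = ?R0 B"
      using that tab_content_mem[OF assms(1,2), of B R]
      by (auto simp: tableaux_def ssct_def extensional_def split: if_splits)
  qed
  moreover have "?R0 \<in> ?T \<longleftrightarrow> horizontal_strip l v c"
  proof -
    have "tab_content k n l v ?R0 = image_mset (\<lambda>_. a) (mset_set (skew_boxes k n l v))"
      unfolding tab_content_def by (intro image_mset_cong) (simp add: finite_skew_boxes[OF assms(1,2)])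
    then have "tab_content k n l v ?R0 = replicate_mset (card (skew_boxes k n l v)) a"
      by (simp add: image_mset_const_eq)
    moreover have "?R0 (box k n p) = a" if "p \<in> skew_points l v" for p
      using that box_in_skew_boxes_iff[OF assms(1,2)] by simp
    then have "ssct k n l v ?R0 \<longleftrightarrow>
        (\<forall>x1 x2 y. (x1, y) \<in> skew_points l v \<longrightarrow> (x2, y) \<in> skew_points l v \<longrightarrow> x2 \<le> x1)"
      unfolding ssct_def by (auto simp: not_le; meson leD leI)
    then have "ssct k n l v ?R0 \<longleftrightarrow> interlaces l v"
      using interlaces_iff_one_box_per_row[OF assms] by simp
    ultimately show ?thesis
      using card_skew_boxes[OF assms]
      by (auto simp: tableaux_def horizontal_strip_def dest: arg_cong[of _ _ size])
  qed
  ultimately show ?thesis by auto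
qed

lemma skew_schur_replicate:
  assumes "cylpar k n l" "cylpar k n v" "subpart v l"
  shows "skew_schur k n l v (replicate_mset c a) = (if horizontal_strip l v c then 1 else 0)"
  unfolding skew_schur_eq_card tableaux_replicate[OF assms] by simp

definition shapes_between :: "(int \<Rightarrow> int) \<Rightarrow> (int \<Rightarrow> int) \<Rightarrow> (int \<Rightarrow> int) set" where
  "shapes_between l m = {v. cylpar k n v \<and> subpart m v \<and> subpart v l}"

lemma finite_shapes_between: "finite (shapes_between l m)"
  by (rule finite_subset[OF _ finite_cylpar_bounded[of m l]]) (auto simp: shapes_between_def subpart_def)

lemma skew_points_split:
  assumes "subpart m v" "subpart v l"
  shows "skew_points l m = skew_points v m \<union> skew_points l v"
    and "skew_points v m \<inter> skew_points l v = {}"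
  using assms by (auto simp: skew_points_def in_part_def subpart_def intro: order_trans less_le_trans)

lemma skew_boxes_split:
  assumes "cylpar k n l" "cylpar k n m" "v \<in> shapes_between l m"
  shows "skew_boxes k n l m = skew_boxes k n v m \<union> skew_boxes k n l v"
    and "skew_boxes k n v m \<inter> skew_boxes k n l v = {}"
proof -
  have v: "cylpar k n v" "subpart m v" "subpart v l" using assms(3) by (auto simp: shapes_between_def)
  show "skew_boxes k n l m = skew_boxes k n v m \<union> skew_boxes k n l v"
    unfolding skew_boxes_def skew_points_split(1)[OF v(2,3)] by (rule image_Un)
  show "skew_boxes k n v m \<inter> skew_boxes k n l v = {}"
  proof (rule ccontr)
    assume "skew_boxes k n v m \<inter> skew_boxes k n l v \<noteq> {}"
    then obtain p where "p \<in> skew_points v m" "box k n p \<in> skew_boxes k n l v"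
      unfolding skew_boxes_def by blast
    then show False
      using box_in_skew_boxes_iff[OF assms(1) v(1)] skew_points_split(2)[OF v(2,3)] by blast
  qed
qed

lemma tab_content_split:
  assumes "cylpar k n l" "cylpar k n m" "v \<in> shapes_between l m"
  shows "tab_content k n l m R = tab_content k n v m R + tab_content k n l v R"
proof -
  have "cylpar k n v" using assms(3) by (simp add: shapes_between_def)
  then show ?thesis
    unfolding tab_content_def skew_boxes_split(1)[OF assms]
    using finite_skew_boxes assms skew_boxes_split(2)[OF assms] by (simp add: mset_set_Union)
qed

text \<open>The entries satisfying a down-closed \<open>P\<close> fill the bottom of each column of a tableau;
  \<open>cut_shape\<close> is their outline.\<close>

definition cut_shape ::
    "('a::linorder \<Rightarrow> bool) \<Rightarrow> ((int \<times> int) set \<Rightarrow> 'a) \<Rightarrow> (int \<Rightarrow> int) \<Rightarrow> (int \<Rightarrow> int) \<Rightarrow> int \<Rightarrow> int" where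
  "cut_shape P R l m x = threshold (m x) (l x) (\<lambda>y. P (R (box k n (x, y))))"

definition glue :: "(int \<Rightarrow> int) \<Rightarrow> (int \<Rightarrow> int) \<Rightarrow> ((int \<times> int) set \<Rightarrow> 'a) \<Rightarrow>
    ((int \<times> int) set \<Rightarrow> 'a) \<Rightarrow> (int \<times> int) set \<Rightarrow> 'a" where
  "glue v m R1 R2 B = (if B \<in> skew_boxes k n v m then R1 B else R2 B)"

context
  fixes l m :: "int \<Rightarrow> int" and P :: "'a::linorder \<Rightarrow> bool" and R :: "(int \<times> int) set \<Rightarrow> 'a"
  assumes l: "cylpar k n l" and m: "cylpar k n m" and ml: "subpart m l"
    and R: "ssct k n l m R" and P: "down_closed P"

begin

lemma cut_shape_column:
  shows "m x \<le> cut_shape P R l m x" "cut_shape P R l m x \<le> l x"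
    and "(x, y) \<in> skew_points l m \<Longrightarrow> P (R (box k n (x, y))) \<longleftrightarrow> y \<le> cut_shape P R l m x"
proof -
  let ?Q = "\<lambda>y. P (R (box k n (x, y)))"
  have ord: "m x \<le> l x" using ml by (simp add: subpart_def)
  have dw: "?Q y" if "m x < y" "y \<le> y'" "y' \<le> l x" "?Q y'" for y y'
  proof (cases "y = y'")
    case False
    with that have "R (box k n (x, y)) \<le> R (box k n (x, y'))"
      using R by (simp add: ssct_def mem_skew_points)
    then show ?thesis using P that(4) by (auto simp: down_closed_def)
  qed (use that in simp)
  note spec = threshold_spec[of "m x" "l x" ?Q, OF ord dw]
  show "m x \<le> cut_shape P R l m x" "cut_shape P R l m x \<le> l x"
    using spec by (simp_all add: cut_shape_def)
  show "(x, y) \<in> skew_points l m \<Longrightarrow> ?Q y \<longleftrightarrow> y \<le> cut_shape P R l m x"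
    using spec by (simp add: cut_shape_def mem_skew_points)
qed

lemma cut_shape_between: "cut_shape P R l m \<in> shapes_between l m"
proof -
  let ?v = "cut_shape P R l m"
  note col = cut_shape_column
  have "?v (x + 1) \<le> ?v x" for x
  proof (rule ccontr)
    assume "\<not> ?v (x + 1) \<le> ?v x"
    let ?y = "?v (x + 1)"
    have "m (x + 1) \<le> m x" "l (x + 1) \<le> l x" using l m by (auto intro: cylpar_step)
    then have in1: "(x, ?y) \<in> skew_points l m" and in2: "(x + 1, ?y) \<in> skew_points l m"
      using \<open>\<not> ?v (x + 1) \<le> ?v x\<close> col(1,2)[where x = x] col(2)[where x = "x + 1"]
      by (auto simp: mem_skew_points)
    then have "R (box k n (x, ?y)) < R (box k n (x + 1, ?y))"
      using R by (simp add: ssct_def)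
    moreover have "P (R (box k n (x + 1, ?y)))" "\<not> P (R (box k n (x, ?y)))"
      using col(3)[OF in1] col(3)[OF in2] \<open>\<not> ?v (x + 1) \<le> ?v x\<close> by auto
    ultimately show False using P by (auto simp: down_closed_def dest: less_imp_le)
  qed
  moreover have "?v (x + int k) = ?v x - nk" for x
    unfolding cut_shape_def[of P R l m "x + int k"]
  proof (rule threshold_eqI)
    show "m (x + int k) \<le> ?v x - nk" "?v x - nk \<le> l (x + int k)"
      using col(1,2)[where x = x] cylpar_period[OF l] cylpar_period[OF m] by simp_all
    fix y assume "m (x + int k) < y" "y \<le> l (x + int k)"
    then have "(x, y + nk) \<in> skew_points l m"
      using cylpar_period[OF l] cylpar_period[OF m] by (simp add: mem_skew_points)
    then show "P (R (box k n (x + int k, y))) \<longleftrightarrow> y \<le> ?v x - nk"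
      using col(3) box_shift_column by auto
  qed
  ultimately show ?thesis
    using col(1,2) by (auto simp: shapes_between_def subpart_def intro!: cylparI)
qed

lemma cut_shape_content:
  shows "\<forall>a\<in>#tab_content k n (cut_shape P R l m) m R. P a"
    and "\<forall>a\<in>#tab_content k n l (cut_shape P R l m) R. \<not> P a"
proof -
  let ?v = "cut_shape P R l m"
  have v: "cylpar k n ?v" "subpart m ?v" "subpart ?v l"
    using cut_shape_between by (simp_all add: shapes_between_def)
  show "\<forall>a\<in>#tab_content k n ?v m R. P a" "\<forall>a\<in>#tab_content k n l ?v R. \<not> P a"
    unfolding tab_content_all[OF v(1) m] tab_content_all[OF l v(1)]
    using cut_shape_column(3) skew_points_split(1)[OF v(2,3)] by (auto simp: mem_skew_points)
qed

lemma glue_cut_shape: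
  "glue (cut_shape P R l m) m (restrict R (skew_boxes k n (cut_shape P R l m) m))
     (restrict R (skew_boxes k n l (cut_shape P R l m))) = R"
  using R cut_shape_between skew_boxes_split(1)[OF l m]
  by (fastforce simp: glue_def ssct_def extensional_def shapes_between_def)

end

context
  fixes l m v :: "int \<Rightarrow> int" and P :: "'a::linorder \<Rightarrow> bool" and R1 R2 :: "(int \<times> int) set \<Rightarrow> 'a"
  assumes l: "cylpar k n l" and m: "cylpar k n m" and v: "v \<in> shapes_between l m" and P: "down_closed P"
    and R1: "ssct k n v m R1" "\<forall>a\<in>#tab_content k n v m R1. P a"
    and R2: "ssct k n l v R2" "\<forall>a\<in>#tab_content k n l v R2. \<not> P a"

begin

lemma glue_lower:
  assumes "p \<in> skew_points v m"
  shows "glue v m R1 R2 (box k n p) = R1 (box k n p)" and "P (glue v m R1 R2 (box k n p))"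
  using assms v R1(2) box_in_skew_boxes_iff[OF _ m] tab_content_all[OF _ m, of v R1 P]
  by (auto simp: glue_def shapes_between_def)

lemma glue_upper:
  assumes "p \<in> skew_points l v"
  shows "glue v m R1 R2 (box k n p) = R2 (box k n p)" and "\<not> P (glue v m R1 R2 (box k n p))"
  using assms v R2(2) box_in_skew_boxes_iff[OF _ m] tab_content_all[OF l, of v R2 "\<lambda>a. \<not> P a"]
    skew_points_split(2)[of m v l] by (auto simp: glue_def shapes_between_def)

lemma glue_lower_less_upper:
  assumes "p \<in> skew_points v m" "q \<in> skew_points l v"
  shows "glue v m R1 R2 (box k n p) < glue v m R1 R2 (box k n q)"
proof (rule ccontr)
  assume "\<not> ?thesis"
  then show False
    using glue_lower(2)[OF assms(1)] glue_upper(2)[OF assms(2)] P by (auto simp: down_closed_def not_less)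
qed

lemma glue_column:
  assumes "(x, y1) \<in> skew_points l m" "(x, y2) \<in> skew_points l m" "y1 < y2"
  shows "glue v m R1 R2 (box k n (x, y1)) \<le> glue v m R1 R2 (box k n (x, y2))"
proof -
  consider "y2 \<le> v x" | "v x < y1" | "y1 \<le> v x" "v x < y2" by linarith
  then show ?thesis
  proof cases
    case 1
    then have "(x, y1) \<in> skew_points v m" "(x, y2) \<in> skew_points v m"
      using assms by (auto simp: mem_skew_points)
    then show ?thesis using R1(1) assms(3) glue_lower(1) by (simp add: ssct_def)
  next
    case 2
    then have "(x, y1) \<in> skew_points l v" "(x, y2) \<in> skew_points l v"
      using assms by (auto simp: mem_skew_points)
    then show ?thesis using R2(1) assms(3) glue_upper(1) by (simp add: ssct_def)
  next
    case 3
    then have "(x, y1) \<in> skew_points v m" "(x, y2) \<in> skew_points l v"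
      using assms by (auto simp: mem_skew_points)
    then show ?thesis using glue_lower_less_upper less_imp_le by blast
  qed
qed

lemma glue_row:
  assumes "(x1, y) \<in> skew_points l m" "(x2, y) \<in> skew_points l m" "x1 < x2"
  shows "glue v m R1 R2 (box k n (x1, y)) < glue v m R1 R2 (box k n (x2, y))"
proof -
  have "v x2 \<le> v x1" using v assms(3) cylpar_antimono by (simp add: shapes_between_def)
  then consider "y \<le> v x2" | "v x1 < y" | "y \<le> v x1" "v x2 < y" by linarith
  then show ?thesis
  proof cases
    case 1
    then have "(x1, y) \<in> skew_points v m" "(x2, y) \<in> skew_points v m"
      using assms \<open>v x2 \<le> v x1\<close> by (auto simp: mem_skew_points)
    then show ?thesis using R1(1) assms(3) glue_lower(1) by (simp add: ssct_def)
  next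
    case 2
    then have "(x1, y) \<in> skew_points l v" "(x2, y) \<in> skew_points l v"
      using assms \<open>v x2 \<le> v x1\<close> by (auto simp: mem_skew_points)
    then show ?thesis using R2(1) assms(3) glue_upper(1) by (simp add: ssct_def)
  next
    case 3
    then have "(x1, y) \<in> skew_points v m" "(x2, y) \<in> skew_points l v"
      using assms by (auto simp: mem_skew_points)
    then show ?thesis using glue_lower_less_upper by blast
  qed
qed

lemma ssct_glue: "ssct k n l m (glue v m R1 R2)"
  unfolding ssct_def
proof (intro conjI allI impI)
  show "glue v m R1 R2 \<in> extensional (skew_boxes k n l m)"
    using R2(1) skew_boxes_split(1)[OF l m v] by (auto simp: ssct_def glue_def extensional_def)
qed (use glue_column glue_row in blast)+

lemma cut_shape_glue: "cut_shape P (glue v m R1 R2) l m = v"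
proof
  fix x
  show "cut_shape P (glue v m R1 R2) l m x = v x"
    unfolding cut_shape_def
  proof (rule threshold_eqI)
    show "m x \<le> v x" "v x \<le> l x" using v by (simp_all add: shapes_between_def subpart_def)
    fix y assume "m x < y" "y \<le> l x"
    then have "(x, y) \<in> skew_points v m \<and> y \<le> v x \<or> (x, y) \<in> skew_points l v \<and> \<not> y \<le> v x"
      by (auto simp: mem_skew_points)
    then show "P (glue v m R1 R2 (box k n (x, y))) \<longleftrightarrow> y \<le> v x"
      using glue_lower(2) glue_upper(2) by blast
  qed
qed

lemma restrict_glue:
  shows "restrict (glue v m R1 R2) (skew_boxes k n v m) = R1"
    and "restrict (glue v m R1 R2) (skew_boxes k n l v) = R2"
  using R1(1) R2(1) skew_boxes_split(2)[OF l m v]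
  by (fastforce simp: ssct_def glue_def extensional_def)+

end

lemma glue_in_tableaux:
  assumes "cylpar k n l" "cylpar k n m" "v \<in> shapes_between l m" "down_closed P"
    and R1: "R1 \<in> tableaux v m (filter_mset P M)"
    and R2: "R2 \<in> tableaux l v (filter_mset (\<lambda>a. \<not> P a) M)"
  shows "glue v m R1 R2 \<in> tableaux l m M"
    and "cut_shape P (glue v m R1 R2) l m = v"
    and "restrict (glue v m R1 R2) (skew_boxes k n v m) = R1"
    and "restrict (glue v m R1 R2) (skew_boxes k n l v) = R2"
proof -
  have v: "cylpar k n v" using assms(3) by (simp add: shapes_between_def)
  have R1': "ssct k n v m R1" "\<forall>a\<in>#tab_content k n v m R1. P a"
    and R2': "ssct k n l v R2" "\<forall>a\<in>#tab_content k n l v R2. \<not> P a"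
    using R1 R2 by (auto simp: tableaux_def)
  note glued = ssct_glue[OF assms(1-4) R1' R2'] cut_shape_glue[OF assms(1-4) R1' R2']
    restrict_glue[OF assms(1-4) R1' R2']
  then show "cut_shape P (glue v m R1 R2) l m = v"
    and "restrict (glue v m R1 R2) (skew_boxes k n v m) = R1"
    and "restrict (glue v m R1 R2) (skew_boxes k n l v) = R2" by simp_all
  have "tab_content k n l m (glue v m R1 R2) = tab_content k n v m R1 + tab_content k n l v R2"
    using tab_content_split[OF assms(1-3)] glued(3,4)
      tab_content_restrict[OF v assms(2)] tab_content_restrict[OF assms(1) v] by metis
  then show "glue v m R1 R2 \<in> tableaux l m M"
    using glued(1) R1 R2 multiset_partition[of M P, symmetric] by (simp add: tableaux_def)
qed

lemma restrict_cut_in_tableaux: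
  assumes "cylpar k n l" "cylpar k n m" "subpart m l" "down_closed P" and R: "R \<in> tableaux l m M"
  defines "v \<equiv> cut_shape P R l m"
  shows "restrict R (skew_boxes k n v m) \<in> tableaux v m (filter_mset P M)"
    and "restrict R (skew_boxes k n l v) \<in> tableaux l v (filter_mset (\<lambda>a. \<not> P a) M)"
proof -
  have R': "ssct k n l m R" "tab_content k n l m R = M" using R by (simp_all add: tableaux_def)
  have v: "v \<in> shapes_between l m" "cylpar k n v" "subpart m v" "subpart v l"
    using cut_shape_between[OF assms(1-3) R'(1) assms(4)] by (simp_all add: v_def shapes_between_def)
  have "M = tab_content k n v m R + tab_content k n l v R"
    unfolding R'(2)[symmetric] by (rule tab_content_split[OF assms(1,2) v(1)])
  then have "filter_mset P M = tab_content k n v m R"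
    "filter_mset (\<lambda>a. \<not> P a) M = tab_content k n l v R"
    using filter_mset_sum_partition cut_shape_content[OF assms(1-3) R'(1) assms(4)] by (simp_all add: v_def)
  moreover have "ssct k n v m (restrict R (skew_boxes k n v m))"
    "ssct k n l v (restrict R (skew_boxes k n l v))"
    using ssct_restrict[OF v(2) assms(2) _ R'(1)] ssct_restrict[OF assms(1) v(2) _ R'(1)]
      skew_points_split(1)[OF v(3,4)] by blast+
  ultimately show "restrict R (skew_boxes k n v m) \<in> tableaux v m (filter_mset P M)"
    and "restrict R (skew_boxes k n l v) \<in> tableaux l v (filter_mset (\<lambda>a. \<not> P a) M)"
    by (simp_all add: tableaux_def tab_content_restrict[OF v(2) assms(2)] tab_content_restrict[OF assms(1) v(2)])
qed

lemma skew_schur_split: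
  assumes "cylpar k n l" "cylpar k n m" "subpart m l" "down_closed P"
  shows "skew_schur k n l m M =
    (\<Sum>v\<in>shapes_between l m. skew_schur k n v m (filter_mset P M) * skew_schur k n l v (filter_mset (\<lambda>a. \<not> P a) M))"
proof -
  let ?T1 = "\<lambda>v. tableaux v m (filter_mset P M)" and ?T2 = "\<lambda>v. tableaux l v (filter_mset (\<lambda>a. \<not> P a) M)"
  let ?cut = "\<lambda>R. (cut_shape P R l m, restrict R (skew_boxes k n (cut_shape P R l m) m),
                                  restrict R (skew_boxes k n l (cut_shape P R l m)))"
  have "bij_betw (\<lambda>(v, R1, R2). glue v m R1 R2) (SIGMA v:shapes_between l m. ?T1 v \<times> ?T2 v) (tableaux l m M)"
    by (rule bij_betw_byWitness[where f' = ?cut])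
      (use glue_in_tableaux[OF assms(1,2) _ assms(4)] restrict_cut_in_tableaux[OF assms]
        cut_shape_between[OF assms(1-3) _ assms(4)] glue_cut_shape[OF assms(1-3) _ assms(4)]
       in \<open>fastforce simp: tableaux_def\<close>)+
  then have "card (tableaux l m M) = card (SIGMA v:shapes_between l m. ?T1 v \<times> ?T2 v)"
    by (rule bij_betw_same_card[symmetric])
  also have "\<dots> = (\<Sum>v\<in>shapes_between l m. card (?T1 v) * card (?T2 v))"
    by (subst card_SigmaI[OF finite_shapes_between])
      (auto simp: shapes_between_def card_cartesian_product intro!: finite_cartesian_product finite_tableaux assms(1,2))
  finally show ?thesis by (simp add: skew_schur_eq_card)
qed

section \<open>Horizontal strips\<close>

definition strips_below :: "(int \<Rightarrow> int) \<Rightarrow> nat \<Rightarrow> (int \<Rightarrow> int) set" where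
  "strips_below a c = {v. cylpar k n v \<and> horizontal_strip a v c}"

definition strips_above :: "(int \<Rightarrow> int) \<Rightarrow> nat \<Rightarrow> (int \<Rightarrow> int) set" where
  "strips_above a c = {l. cylpar k n l \<and> horizontal_strip l a c}"

lemma interlaces_subpart: "interlaces l v \<Longrightarrow> subpart v l"
  by (simp add: interlaces_def subpart_def)

lemma horizontal_strip_zero_iff:
  assumes "cylpar k n a" "cylpar k n m" "subpart m a"
  shows "horizontal_strip a m 0 \<longleftrightarrow> m = a"
proof
  assume "horizontal_strip a m 0"
  then have "(\<Sum>x\<in>{0..<int k}. a x - m x) = 0" by (simp add: horizontal_strip_def skew_size_def)
  moreover have "\<forall>x\<in>{0..<int k}. 0 \<le> a x - m x" using assms(3) by (simp add: subpart_def)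
  ultimately have "\<forall>x\<in>{0..<int k}. a x - m x = 0"
    using sum_nonneg_eq_0_iff[of "{0..<int k}" "\<lambda>x. a x - m x"] by simp
  then show "m = a" by (intro cylpar_eqI[OF assms(2,1)]) simp
next
  assume "m = a"
  then show "horizontal_strip a m 0"
    using cylpar_step[OF assms(1)] by (simp add: horizontal_strip_def interlaces_def skew_size_def)
qed

lemma skew_schur_empty:
  assumes "cylpar k n a" "cylpar k n m" "subpart m a"
  shows "skew_schur k n a m ({#} :: 'a::linorder multiset) = (if m = a then 1 else 0)"
  using skew_schur_replicate[OF assms, of 0 undefined] horizontal_strip_zero_iff[OF assms] by simp

lemma skew_schur_remove_max:
  assumes "cylpar k n a" "cylpar k n m" "subpart m a"
    and "M \<noteq> {#}" and x: "x = Max (set_mset (M :: 'a::linorder multiset))"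
  shows "skew_schur k n a m M =
    (\<Sum>v\<in>{v \<in> strips_below a (count M x). subpart m v}. skew_schur k n v m (filter_mset (\<lambda>y. y < x) M))"
proof -
  let ?c = "count M x" and ?M' = "filter_mset (\<lambda>y. y < x) M"
  have "filter_mset (\<lambda>y. \<not> y < x) M = filter_mset (\<lambda>y. y = x) M"
    using x by (intro filter_mset_cong) (auto simp: not_less order.antisym)
  then have top: "filter_mset (\<lambda>y. \<not> y < x) M = replicate_mset ?c x"
    by (simp add: filter_eq_replicate_mset)
  have "down_closed (\<lambda>y. y < x)" by (auto simp: down_closed_def)
  then have "skew_schur k n a m M =
      (\<Sum>v\<in>shapes_between a m. skew_schur k n v m ?M' * skew_schur k n a v (replicate_mset ?c x))"
    unfolding top[symmetric] by (rule skew_schur_split[OF assms(1-3)])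
  also have "\<dots> = (\<Sum>v\<in>shapes_between a m. if horizontal_strip a v ?c then skew_schur k n v m ?M' else 0)"
  proof (rule sum.cong[OF refl])
    fix v assume "v \<in> shapes_between a m"
    then have "cylpar k n v" "subpart v a" by (simp_all add: shapes_between_def)
    then show "skew_schur k n v m ?M' * skew_schur k n a v (replicate_mset ?c x) =
        (if horizontal_strip a v ?c then skew_schur k n v m ?M' else 0)"
      using skew_schur_replicate[OF assms(1), of v ?c x] by simp
  qed
  also have "\<dots> = (\<Sum>v\<in>{v \<in> shapes_between a m. horizontal_strip a v ?c}. skew_schur k n v m ?M')"
    by (simp add: sum.inter_filter finite_shapes_between)
  also have "{v \<in> shapes_between a m. horizontal_strip a v ?c} = {v \<in> strips_below a ?c. subpart m v}"
    by (auto simp: shapes_between_def strips_below_def horizontal_strip_def interlaces_subpart)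
  finally show ?thesis .
qed

lemma skew_schur_remove_min:
  assumes "cylpar k n l" "cylpar k n a" "subpart a l"
    and "M \<noteq> {#}" and x: "x = Min (set_mset (M :: 'a::linorder multiset))"
  shows "skew_schur k n l a M =
    (\<Sum>v\<in>{v \<in> strips_above a (count M x). subpart v l}. skew_schur k n l v (filter_mset (\<lambda>y. x < y) M))"
proof -
  let ?c = "count M x" and ?M' = "filter_mset (\<lambda>y. x < y) M"
  have "filter_mset (\<lambda>y. y \<le> x) M = filter_mset (\<lambda>y. y = x) M"
    using x by (intro filter_mset_cong) (auto simp: order.antisym)
  then have bottom: "filter_mset (\<lambda>y. y \<le> x) M = replicate_mset ?c x"
    by (simp add: filter_eq_replicate_mset)
  have rest: "filter_mset (\<lambda>y. \<not> y \<le> x) M = ?M'" by (simp add: not_le)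
  have "down_closed (\<lambda>y. y \<le> x)" by (auto simp: down_closed_def)
  then have "skew_schur k n l a M =
      (\<Sum>v\<in>shapes_between l a. skew_schur k n v a (replicate_mset ?c x) * skew_schur k n l v ?M')"
    unfolding bottom[symmetric] rest[symmetric] by (rule skew_schur_split[OF assms(1-3)])
  also have "\<dots> = (\<Sum>v\<in>shapes_between l a. if horizontal_strip v a ?c then skew_schur k n l v ?M' else 0)"
  proof (rule sum.cong[OF refl])
    fix v assume "v \<in> shapes_between l a"
    then have "cylpar k n v" "subpart a v" by (simp_all add: shapes_between_def)
    then show "skew_schur k n v a (replicate_mset ?c x) * skew_schur k n l v ?M' =
        (if horizontal_strip v a ?c then skew_schur k n l v ?M' else 0)"
      using skew_schur_replicate[OF _ assms(2), of v ?c x] by simp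
  qed
  also have "\<dots> = (\<Sum>v\<in>{v \<in> shapes_between l a. horizontal_strip v a ?c}. skew_schur k n l v ?M')"
    by (simp add: sum.inter_filter finite_shapes_between)
  also have "{v \<in> shapes_between l a. horizontal_strip v a ?c} = {v \<in> strips_above a ?c. subpart v l}"
    by (auto simp: shapes_between_def strips_above_def horizontal_strip_def interlaces_subpart)
  finally show ?thesis .
qed

lemma cylparI_interlaces:
  assumes "interlaces l v"
  shows "(\<And>x. l (x + int k) = l x - nk) \<Longrightarrow> cylpar k n l"
    and "(\<And>x. v (x + int k) = v x - nk) \<Longrightarrow> cylpar k n v"
proof -
  have "l (x + 1) \<le> l x" "v (x + 1) \<le> v x" for x
    using assms unfolding interlaces_def by (metis order_trans)+
  then show "(\<And>x. l (x + int k) = l x - nk) \<Longrightarrow> cylpar k n l"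
    and "(\<And>x. v (x + int k) = v x - nk) \<Longrightarrow> cylpar k n v"
    by (simp_all add: cylparI)
qed

lemma finite_strips_below: "finite (strips_below a c)"
  by (rule finite_subset[OF _ finite_cylpar_bounded[of "\<lambda>x. a (x + 1)" a]])
    (auto simp: strips_below_def horizontal_strip_def interlaces_def)

lemma finite_strips_above: "finite (strips_above a c)"
proof (rule finite_subset[OF _ finite_cylpar_bounded[of a "\<lambda>x. a (x - 1)"]])
  have "a x \<le> l x \<and> l x \<le> a (x - 1)" if "interlaces l a" for l x
    using that[unfolded interlaces_def, rule_format, of x] that[unfolded interlaces_def, rule_format, of "x - 1"]
    by simp
  then show "strips_above a c \<subseteq> {v. cylpar k n v \<and> (\<forall>x\<in>{0..<int k}. a x \<le> v x \<and> v x \<le> a (x - 1))}"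
    by (auto simp: strips_above_def horizontal_strip_def)
qed

lemma sum_diff_shift:
  assumes "\<And>x. f (x + int k) = f x - nk" "\<And>x. g (x + int k) = g x - nk"
  shows "(\<Sum>x\<in>{0..<int k}. f (x + j) - g (x + j)) = (\<Sum>x\<in>{0..<int k}. f x - g x)"
  using sum_periodic_shift[of "int k" "\<lambda>x. f x - g x" j] assms k_pos by simp

lemma max_period: "cylpar k n a \<Longrightarrow> cylpar k n v \<Longrightarrow> max (a (x + int k)) (v (x + int k)) = max (a x) (v x) - nk"
  and min_period: "cylpar k n a \<Longrightarrow> cylpar k n v \<Longrightarrow> min (a (x + int k)) (v (x + int k)) = min (a x) (v x) - nk"
  by (simp_all add: cylpar_period max_def min_def)

text \<open>The boxes removed from column \<open>y - 1\<close> of \<open>a\<close> are added on top of column \<open>y\<close>.\<close>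

definition move_strip_out :: "(int \<Rightarrow> int) \<Rightarrow> (int \<Rightarrow> int) \<Rightarrow> int \<Rightarrow> int" where
  "move_strip_out a v y = a y + a (y - 1) - v (y - 1)"

definition move_strip_in :: "(int \<Rightarrow> int) \<Rightarrow> (int \<Rightarrow> int) \<Rightarrow> int \<Rightarrow> int" where
  "move_strip_in a l x = a (x + 1) + a x - l (x + 1)"

lemma move_strip_out_mem:
  assumes a: "cylpar k n a" and "v \<in> strips_below a c"
  shows "move_strip_out a v \<in> strips_above a c"
proof -
  let ?l = "move_strip_out a v"
  have v: "cylpar k n v" "interlaces a v" "skew_size a v = int c"
    using assms(2) by (auto simp: strips_below_def horizontal_strip_def)
  have b: "a (x + 1) \<le> v x" "v x \<le> a x" for x using v(2) by (simp_all add: interlaces_def)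
  have il: "interlaces ?l a"
    unfolding interlaces_def move_strip_out_def using b(1) b(2)[of "_ - 1"] by simp
  moreover have "cylpar k n ?l"
  proof (rule cylparI_interlaces(1)[OF il])
    fix x
    have e: "x - 1 + int k = x + int k - 1" by simp
    show "?l (x + int k) = ?l x - nk"
      using cylpar_period[OF a, of x] cylpar_period[OF a, of "x - 1"] cylpar_period[OF v(1), of "x - 1"]
      unfolding e by (simp add: move_strip_out_def)
  qed
  moreover have "skew_size ?l a = skew_size a v"
    using sum_diff_shift[of a v "- 1"] cylpar_period[OF a] cylpar_period[OF v(1)]
    by (simp add: skew_size_def move_strip_out_def)
  ultimately show ?thesis
    using v(3) by (simp add: strips_above_def horizontal_strip_def)
qed

lemma move_strip_in_mem:
  assumes a: "cylpar k n a" and "l \<in> strips_above a c"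
  shows "move_strip_in a l \<in> strips_below a c"
proof -
  let ?v = "move_strip_in a l"
  have l: "cylpar k n l" "interlaces l a" "skew_size l a = int c"
    using assms(2) by (auto simp: strips_above_def horizontal_strip_def)
  have b: "l (x + 1) \<le> a x" "a x \<le> l x" for x using l(2) by (simp_all add: interlaces_def)
  have iv: "interlaces a ?v"
    unfolding interlaces_def move_strip_in_def using b(1) b(2)[of "_ + 1"] by simp
  moreover have "cylpar k n ?v"
  proof (rule cylparI_interlaces(2)[OF iv])
    fix x
    have e: "x + 1 + int k = x + int k + 1" by simp
    show "?v (x + int k) = ?v x - nk"
      using cylpar_period[OF a, of x] cylpar_period[OF a, of "x + 1"] cylpar_period[OF l(1), of "x + 1"]
      unfolding e by (simp add: move_strip_in_def)
  qed
  moreover have "skew_size a ?v = skew_size l a"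
    using sum_diff_shift[of l a 1] cylpar_period[OF a] cylpar_period[OF l(1)]
    by (simp add: skew_size_def move_strip_in_def)
  ultimately show ?thesis
    using l(3) by (simp add: strips_below_def horizontal_strip_def)
qed

lemma card_strips_below_eq_above:
  assumes "cylpar k n a"
  shows "card (strips_below a c) = card (strips_above a c)"
proof (rule bij_betw_same_card)
  show "bij_betw (move_strip_out a) (strips_below a c) (strips_above a c)"
    by (rule bij_betw_byWitness[where f' = "move_strip_in a"])
      (use move_strip_out_mem[OF assms] move_strip_in_mem[OF assms] in
        \<open>auto simp: move_strip_out_def move_strip_in_def\<close>)
qed

text \<open>Column \<open>y\<close> of the new outer shape exceeds \<open>max a v\<close> by the number of boxes of
  \<open>min a v / s\<close> in column \<open>y - 1\<close>.\<close>

definition toggle_out :: "(int \<Rightarrow> int) \<Rightarrow> (int \<Rightarrow> int) \<Rightarrow> (int \<Rightarrow> int) \<Rightarrow> int \<Rightarrow> int" where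
  "toggle_out a s v y = max (a y) (v y) + min (a (y - 1)) (v (y - 1)) - s (y - 1)"

definition toggle_in :: "(int \<Rightarrow> int) \<Rightarrow> (int \<Rightarrow> int) \<Rightarrow> (int \<Rightarrow> int) \<Rightarrow> int \<Rightarrow> int" where
  "toggle_in a r v x = max (a (x + 1)) (v (x + 1)) + min (a x) (v x) - r (x + 1)"

lemma skew_size_toggle_out:
  assumes "cylpar k n a" "cylpar k n s" "cylpar k n v"
  shows "skew_size (toggle_out a s v) w = skew_size (\<lambda>x. max (a x) (v x)) w + skew_size (\<lambda>x. min (a x) (v x)) s"
proof -
  have "skew_size (toggle_out a s v) w = skew_size (\<lambda>x. max (a x) (v x)) w +
      (\<Sum>x\<in>{0..<int k}. min (a (x - 1)) (v (x - 1)) - s (x - 1))"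
    by (simp add: skew_size_def toggle_out_def sum.distrib[symmetric] algebra_simps)
  also have "(\<Sum>x\<in>{0..<int k}. min (a (x - 1)) (v (x - 1)) - s (x - 1)) = skew_size (\<lambda>x. min (a x) (v x)) s"
    using sum_diff_shift[of "\<lambda>x. min (a x) (v x)" s "- 1"] min_period[OF assms(1,3)] cylpar_period[OF assms(2)]
    by (simp add: skew_size_def)
  finally show ?thesis .
qed

lemma skew_size_toggle_in:
  assumes "cylpar k n a" "cylpar k n r" "cylpar k n v"
  shows "skew_size w (toggle_in a r v) = skew_size w (\<lambda>x. min (a x) (v x)) + skew_size r (\<lambda>x. max (a x) (v x))"
proof -
  have "skew_size w (toggle_in a r v) = skew_size w (\<lambda>x. min (a x) (v x)) +
      (\<Sum>x\<in>{0..<int k}. r (x + 1) - max (a (x + 1)) (v (x + 1)))"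
    by (simp add: skew_size_def toggle_in_def sum.distrib[symmetric] algebra_simps)
  also have "(\<Sum>x\<in>{0..<int k}. r (x + 1) - max (a (x + 1)) (v (x + 1))) = skew_size r (\<lambda>x. max (a x) (v x))"
    using sum_diff_shift[of r "\<lambda>x. max (a x) (v x)" 1] max_period[OF assms(1,3)] cylpar_period[OF assms(2)]
    by (simp add: skew_size_def)
  finally show ?thesis .
qed

lemma toggle_out_mem:
  assumes a: "cylpar k n a" and "s \<in> strips_below a p" "v \<in> strips_above s q"
  shows "toggle_out a s v \<in> strips_above a q" and "v \<in> strips_below (toggle_out a s v) p"
proof -
  let ?r = "toggle_out a s v"
  have s: "cylpar k n s" "interlaces a s" "skew_size a s = int p"
    and v: "cylpar k n v" "interlaces v s" "skew_size v s = int q"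
    using assms(2,3) by (auto simp: strips_below_def strips_above_def horizontal_strip_def)
  have b: "a (x + 1) \<le> s x" "s x \<le> a x" "v (x + 1) \<le> s x" "s x \<le> v x" for x
    using s(2) v(2) by (simp_all add: interlaces_def)
  have "a y \<le> ?r y \<and> v y \<le> ?r y \<and> ?r y \<le> a (y - 1) \<and> ?r y \<le> v (y - 1)" for y
    using b[of "y - 1"] by (auto simp: toggle_out_def max_def min_def)
  then have ra: "interlaces ?r a" and rv: "interlaces ?r v"
    unfolding interlaces_def by (metis add_diff_cancel_right')+
  have "cylpar k n ?r"
  proof (rule cylparI_interlaces(1)[OF ra])
    fix x
    have e: "x - 1 + int k = x + int k - 1" by simp
    show "?r (x + int k) = ?r x - nk"
      using max_period[OF a v(1), of x] min_period[OF a v(1), of "x - 1"] cylpar_period[OF s(1), of "x - 1"]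
      unfolding e toggle_out_def by simp
  qed
  moreover have "skew_size ?r a = skew_size v s" "skew_size ?r v = skew_size a s"
    unfolding skew_size_toggle_out[OF a s(1) v(1)]
    by (auto simp: skew_size_def sum.distrib[symmetric] max_def min_def intro!: sum.cong)
  ultimately show "?r \<in> strips_above a q" "v \<in> strips_below ?r p"
    using ra rv v(1) s(3) v(3) by (simp_all add: strips_below_def strips_above_def horizontal_strip_def)
qed

lemma toggle_in_mem:
  assumes a: "cylpar k n a" and "r \<in> strips_above a q" "v \<in> strips_below r p"
  shows "toggle_in a r v \<in> strips_below a p" and "v \<in> strips_above (toggle_in a r v) q"
proof -
  let ?s = "toggle_in a r v"
  have r: "cylpar k n r" "interlaces r a" "skew_size r a = int q"
    and v: "cylpar k n v" "interlaces r v" "skew_size r v = int p"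
    using assms(2,3) by (auto simp: strips_below_def strips_above_def horizontal_strip_def)
  have b: "r (x + 1) \<le> a x" "a x \<le> r x" "r (x + 1) \<le> v x" "v x \<le> r x" for x
    using r(2) v(2) by (simp_all add: interlaces_def)
  have "a (x + 1) \<le> ?s x \<and> v (x + 1) \<le> ?s x \<and> ?s x \<le> a x \<and> ?s x \<le> v x" for x
    using b[of x] b[of "x + 1"] by (auto simp: toggle_in_def max_def min_def)
  then have sa: "interlaces a ?s" and sv: "interlaces v ?s"
    unfolding interlaces_def by blast+
  have "cylpar k n ?s"
  proof (rule cylparI_interlaces(2)[OF sa])
    fix x
    have e: "x + 1 + int k = x + int k + 1" by simp
    show "?s (x + int k) = ?s x - nk"
      using max_period[OF a v(1), of "x + 1"] min_period[OF a v(1), of x] cylpar_period[OF r(1), of "x + 1"]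
      unfolding e toggle_in_def by simp
  qed
  moreover have "skew_size a ?s = skew_size r v" "skew_size v ?s = skew_size r a"
    unfolding skew_size_toggle_in[OF a r(1) v(1)]
    by (auto simp: skew_size_def sum.distrib[symmetric] max_def min_def intro!: sum.cong)
  ultimately show "?s \<in> strips_below a p" "v \<in> strips_above ?s q"
    using sa sv v(1) r(3) v(3) by (simp_all add: strips_below_def strips_above_def horizontal_strip_def)
qed

lemma strip_pairs_commute:
  assumes "cylpar k n a"
  shows "bij_betw (\<lambda>(s, v). (toggle_out a s v, v))
    (SIGMA s:strips_below a p. strips_above s q) (SIGMA r:strips_above a q. strips_below r p)"
  by (rule bij_betw_byWitness[where f' = "\<lambda>(r, v). (toggle_in a r v, v)"])
    (use toggle_out_mem[OF assms] toggle_in_mem[OF assms] in \<open>auto simp: toggle_out_def toggle_in_def\<close>)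

end

datatype strip_step = Remove nat | Add nat

context cylindric
begin

fun strip_targets :: "strip_step \<Rightarrow> (int \<Rightarrow> int) \<Rightarrow> (int \<Rightarrow> int) set" where
  "strip_targets (Remove c) a = strips_below a c"
| "strip_targets (Add c) a = strips_above a c"

primrec walk_count :: "(int \<Rightarrow> int) \<Rightarrow> strip_step list \<Rightarrow> nat" where
  "walk_count a [] = 1"
| "walk_count a (s # w) = (\<Sum>b\<in>strip_targets s a. walk_count b w)"

lemma strip_targets_cylpar: "b \<in> strip_targets s a \<Longrightarrow> cylpar k n b"
  by (cases s) (auto simp: strips_below_def strips_above_def)

lemma walk_count_swap:
  assumes "cylpar k n a"
  shows "walk_count a (Remove p # Add q # w) = walk_count a (Add q # Remove p # w)"
proof -
  have "walk_count a (Remove p # Add q # w) = (\<Sum>(s, v)\<in>(SIGMA s:strips_below a p. strips_above s q). walk_count v w)"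
    by (simp add: sum.Sigma finite_strips_below finite_strips_above)
  also have "\<dots> = (\<Sum>z\<in>(SIGMA s:strips_below a p. strips_above s q).
      (\<lambda>(r, v). walk_count v w) ((\<lambda>(s, v). (toggle_out a s v, v)) z))"
    by (rule sum.cong) auto
  also have "\<dots> = (\<Sum>(r, v)\<in>(SIGMA r:strips_above a q. strips_below r p). walk_count v w)"
    by (rule sum.reindex_bij_betw[OF strip_pairs_commute[OF assms]])
  also have "\<dots> = walk_count a (Add q # Remove p # w)"
    by (simp add: sum.Sigma finite_strips_below finite_strips_above)
  finally show ?thesis .
qed

lemma walk_count_move_add:
  "cylpar k n a \<Longrightarrow> walk_count a (map Remove cs @ Add q # w) = walk_count a (Add q # map Remove cs @ w)"
proof (induction cs arbitrary: a)
  case (Cons p cs)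
  have "walk_count a (map Remove (p # cs) @ Add q # w) = (\<Sum>s\<in>strips_below a p. walk_count s (Add q # map Remove cs @ w))"
    using Cons.IH by (auto simp: strips_below_def intro: sum.cong)
  also have "\<dots> = walk_count a (Remove p # Add q # map Remove cs @ w)" by simp
  also have "\<dots> = walk_count a (Add q # Remove p # map Remove cs @ w)" by (rule walk_count_swap[OF Cons.prems])
  finally show ?case by simp
qed simp

lemma walk_count_last: "cylpar k n a \<Longrightarrow> walk_count a (w @ [Remove c]) = walk_count a (w @ [Add c])"
proof (induction w arbitrary: a)
  case Nil
  then show ?case by (simp add: card_strips_below_eq_above)
next
  case (Cons s w)
  then show ?case by (auto intro!: sum.cong dest: strip_targets_cylpar)
qed

lemma walk_count_reverse: "cylpar k n a \<Longrightarrow> walk_count a (map Remove cs) = walk_count a (map Add (rev cs))"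
proof (induction cs arbitrary: a rule: rev_induct)
  case (snoc c cs)
  have "walk_count a (map Remove (cs @ [c])) = walk_count a (map Remove cs @ [Add c])"
    using walk_count_last[OF snoc.prems] by simp
  also have "\<dots> = (\<Sum>b\<in>strips_above a c. walk_count b (map Remove cs))"
    using walk_count_move_add[OF snoc.prems, of cs c "[]"] by simp
  also have "\<dots> = walk_count a (map Add (rev (cs @ [c])))"
    using snoc.IH by (auto simp: strips_above_def intro: sum.cong)
  finally show ?case .
qed simp

end

section \<open>Generating functions\<close>

lemma fsum_decompose:
  fixes F :: "'i \<Rightarrow> 'a fps_mv" and G :: "'j \<Rightarrow> 'i \<Rightarrow> 'a fps_mv"
  assumes "finite S" and sub: "\<And>v. v \<in> S \<Longrightarrow> B v \<subseteq> A"
    and fin: "\<And>v. v \<in> S \<Longrightarrow> finite {i \<in> B v. G v i M' \<noteq> 0}"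
    and F: "\<And>i. i \<in> A \<Longrightarrow> F i M = (\<Sum>v\<in>{v \<in> S. i \<in> B v}. G v i M')"
  shows "finite {i \<in> A. F i M \<noteq> 0}" and "fsum A F M = (\<Sum>v\<in>S. fsum (B v) (G v) M')"
proof -
  define W where "W = (\<Union>v\<in>S. {i \<in> B v. G v i M' \<noteq> 0})"
  have "finite W" unfolding W_def using assms(1) fin by blast
  have "W \<subseteq> A" unfolding W_def using sub by blast
  have supp: "{i \<in> A. F i M \<noteq> 0} \<subseteq> W"
  proof
    fix i assume "i \<in> {i \<in> A. F i M \<noteq> 0}"
    then have "(\<Sum>v\<in>{v \<in> S. i \<in> B v}. G v i M') \<noteq> 0" using F by auto
    then obtain v where "v \<in> {v \<in> S. i \<in> B v}" "G v i M' \<noteq> 0"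
      by (rule sum.not_neutral_contains_not_neutral)
    then show "i \<in> W" unfolding W_def by blast
  qed
  then show "finite {i \<in> A. F i M \<noteq> 0}" using \<open>finite W\<close> by (rule finite_subset)
  have "fsum A F M = (\<Sum>i\<in>W. F i M)"
    unfolding fsum_def by (rule sum.mono_neutral_left[OF \<open>finite W\<close> supp]) (use \<open>W \<subseteq> A\<close> in auto)
  also have "\<dots> = (\<Sum>i\<in>W. \<Sum>v\<in>{v \<in> S. i \<in> B v}. G v i M')"
    using \<open>W \<subseteq> A\<close> F by (auto intro: sum.cong)
  also have "\<dots> = (\<Sum>v\<in>S. \<Sum>i\<in>{i \<in> W. i \<in> B v}. G v i M')"
    by (rule sum.swap_restrict[OF \<open>finite W\<close> assms(1)])
  also have "\<dots> = (\<Sum>v\<in>S. fsum (B v) (G v) M')"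
    unfolding fsum_def
  proof (rule sum.cong[OF refl], rule sum.mono_neutral_right)
    fix v assume "v \<in> S"
    show "finite {i \<in> W. i \<in> B v}" using \<open>finite W\<close> by simp
    show "{i \<in> B v. G v i M' \<noteq> 0} \<subseteq> {i \<in> W. i \<in> B v}" using \<open>v \<in> S\<close> by (auto simp: W_def)
  qed auto
  finally show "fsum A F M = (\<Sum>v\<in>S. fsum (B v) (G v) M')" .
qed

definition letter_counts :: "'a::linorder multiset \<Rightarrow> nat list" where
  "letter_counts M = map (count M) (sorted_list_of_set (set_mset M))"

lemma sorted_list_of_set_Max:
  assumes "finite S" "S \<noteq> {}"
  shows "sorted_list_of_set S = sorted_list_of_set (S - {Max S}) @ [Max S]"
proof (rule sorted_distinct_set_unique)
  have "Max S \<in> S" using assms by simp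
  then have "S = insert (Max S) (S - {Max S})" by blast
  then show "set (sorted_list_of_set S) = set (sorted_list_of_set (S - {Max S}) @ [Max S])"
    using assms(1) by (metis Un_insert_right append_Nil2 finite_Diff set_append set_simps(2) set_sorted_list_of_set)
next
  show "sorted (sorted_list_of_set (S - {Max S}) @ [Max S])"
    using assms by (auto simp: sorted_append intro: Max_ge)
qed (use assms in simp_all)

lemma letter_counts_Max:
  assumes "M \<noteq> {#}" and x: "x = Max (set_mset M)"
  shows "letter_counts M = letter_counts (filter_mset (\<lambda>y. y < x) M) @ [count M x]"
proof -
  have le: "y \<le> x" if "y \<in># M" for y using x that by simp
  then have "set_mset (filter_mset (\<lambda>y. y < x) M) = set_mset M - {x}" by (auto simp: less_le)
  moreover have "sorted_list_of_set (set_mset M) = sorted_list_of_set (set_mset M - {x}) @ [x]"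
    using sorted_list_of_set_Max[of "set_mset M"] assms by simp
  ultimately show ?thesis
    unfolding letter_counts_def using le by (auto simp: less_le intro!: map_cong)
qed

lemma letter_counts_Min:
  assumes "M \<noteq> {#}" and x: "x = Min (set_mset M)"
  shows "letter_counts M = count M x # letter_counts (filter_mset (\<lambda>y. x < y) M)"
proof -
  have le: "x \<le> y" if "y \<in># M" for y using x that by simp
  then have "set_mset (filter_mset (\<lambda>y. x < y) M) = set_mset M - {x}" by (auto simp: less_le)
  moreover have "sorted_list_of_set (set_mset M) = x # sorted_list_of_set (set_mset M - {x})"
    using sorted_list_of_set_nonempty[of "set_mset M"] assms by simp
  ultimately show ?thesis
    unfolding letter_counts_def using le by (auto simp: less_le intro!: map_cong)
qed

context cylindric
begin

definition cylpars_below :: "(int \<Rightarrow> int) \<Rightarrow> (int \<Rightarrow> int) set" where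
  "cylpars_below a = {m. cylpar k n m \<and> subpart m a}"

definition cylpars_above :: "(int \<Rightarrow> int) \<Rightarrow> (int \<Rightarrow> int) set" where
  "cylpars_above a = {l. cylpar k n l \<and> subpart a l}"

lemma fsum_skew_schur_below:
  assumes "cylpar k n a"
  shows "finite {m \<in> cylpars_below a. skew_schur k n a m M \<noteq> 0} \<and>
    fsum (cylpars_below a) (skew_schur k n a) M = walk_count a (map Remove (rev (letter_counts M)))"
  using assms
proof (induction "size M" arbitrary: M a rule: less_induct)
  case less
  show ?case
  proof (cases "M = {#}")
    case True
    have empty: "skew_schur k n a m M = (if m = a then 1 else 0)" if "m \<in> cylpars_below a" for m
      using that True skew_schur_empty[OF less.prems, of m] by (simp add: cylpars_below_def)
    moreover have "a \<in> cylpars_below a" using less.prems by (simp add: cylpars_below_def subpart_refl)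
    ultimately have "{m \<in> cylpars_below a. skew_schur k n a m M \<noteq> 0} = {a}"
      by (auto split: if_splits)
    then show ?thesis
      using \<open>a \<in> cylpars_below a\<close> empty True by (simp add: fsum_def letter_counts_def)
  next
    case False
    define x where "x = Max (set_mset M)"
    let ?c = "count M x" and ?M' = "filter_mset (\<lambda>y. y < x) M"
    have "size ?M' < size M"
      using False by (intro size_filter_unsat_elem[of x]) (simp_all add: x_def)
    note IH = less.hyps[OF this]
    have below: "v \<in> strips_below a ?c \<Longrightarrow> cylpar k n v \<and> subpart v a" for v
      by (auto simp: strips_below_def horizontal_strip_def interlaces_subpart)
    note decomp = fsum_decompose[of "strips_below a ?c" cylpars_below "cylpars_below a" "\<lambda>v. skew_schur k n v" ?M'
        "skew_schur k n a" M, OF finite_strips_below]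
    have rec: "skew_schur k n a m M = (\<Sum>v\<in>{v \<in> strips_below a ?c. m \<in> cylpars_below v}. skew_schur k n v m ?M')"
      if "m \<in> cylpars_below a" for m
      using that skew_schur_remove_max[OF less.prems _ _ False x_def, of m] by (simp add: cylpars_below_def)
    have "fsum (cylpars_below a) (skew_schur k n a) M = (\<Sum>v\<in>strips_below a ?c. walk_count v (map Remove (rev (letter_counts ?M'))))"
      using decomp(2) IH below rec by (auto simp: cylpars_below_def intro: subpart_trans intro!: sum.cong)
    also have "\<dots> = walk_count a (map Remove (rev (letter_counts M)))"
      using letter_counts_Max[OF False x_def] by simp
    finally show ?thesis
      using decomp(1) IH below rec by (auto simp: cylpars_below_def intro: subpart_trans)
  qed
qed

lemma fsum_skew_schur_above:
  assumes "cylpar k n a"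
  shows "finite {l \<in> cylpars_above a. skew_schur k n l a M \<noteq> 0} \<and>
    fsum (cylpars_above a) (\<lambda>l. skew_schur k n l a) M = walk_count a (map Add (letter_counts M))"
  using assms
proof (induction "size M" arbitrary: M a rule: less_induct)
  case less
  show ?case
  proof (cases "M = {#}")
    case True
    have empty: "skew_schur k n l a M = (if l = a then 1 else 0)" if "l \<in> cylpars_above a" for l
      using that True skew_schur_empty[OF _ less.prems, of l] by (auto simp: cylpars_above_def)
    moreover have "a \<in> cylpars_above a" using less.prems by (simp add: cylpars_above_def subpart_refl)
    ultimately have "{l \<in> cylpars_above a. skew_schur k n l a M \<noteq> 0} = {a}"
      by (auto split: if_splits)
    then show ?thesis
      using \<open>a \<in> cylpars_above a\<close> empty True by (simp add: fsum_def letter_counts_def)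
  next
    case False
    define x where "x = Min (set_mset M)"
    let ?c = "count M x" and ?M' = "filter_mset (\<lambda>y. x < y) M"
    have "size ?M' < size M"
      using False by (intro size_filter_unsat_elem[of x]) (simp_all add: x_def)
    note IH = less.hyps[OF this]
    have above: "v \<in> strips_above a ?c \<Longrightarrow> cylpar k n v \<and> subpart a v" for v
      by (auto simp: strips_above_def horizontal_strip_def interlaces_subpart)
    note decomp = fsum_decompose[of "strips_above a ?c" cylpars_above "cylpars_above a" "\<lambda>v l. skew_schur k n l v" ?M'
        "\<lambda>l. skew_schur k n l a" M, OF finite_strips_above]
    have rec: "skew_schur k n l a M = (\<Sum>v\<in>{v \<in> strips_above a ?c. l \<in> cylpars_above v}. skew_schur k n l v ?M')"
      if "l \<in> cylpars_above a" for l
      using that skew_schur_remove_min[OF _ less.prems _ False x_def, of l] by (simp add: cylpars_above_def)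
    have "fsum (cylpars_above a) (\<lambda>l. skew_schur k n l a) M = (\<Sum>v\<in>strips_above a ?c. walk_count v (map Add (letter_counts ?M')))"
      using decomp(2) IH above rec by (auto simp: cylpars_above_def intro: subpart_trans intro!: sum.cong)
    also have "\<dots> = walk_count a (map Add (letter_counts M))"
      using letter_counts_Min[OF False x_def] by simp
    finally show ?thesis
      using decomp(1) IH above rec by (auto simp: cylpars_above_def intro: subpart_trans)
  qed
qed

end

theorem mainTheorem6:
  fixes k n :: nat and alpha :: "int \<Rightarrow> int"
  assumes "1 \<le> k" and "k < n" and "cylpar k n alpha"
  shows "fsummable {mu. cylpar k n mu \<and> subpart mu alpha}
           (\<lambda>mu. (skew_schur k n alpha mu :: ('a::linorder) fps_mv))
       \<and> fsummable {lam. cylpar k n lam \<and> subpart alpha lam}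
           (\<lambda>lam. (skew_schur k n lam alpha :: 'a fps_mv))
       \<and> fsum {mu. cylpar k n mu \<and> subpart mu alpha}
           (\<lambda>mu. (skew_schur k n alpha mu :: 'a fps_mv))
         = fsum {lam. cylpar k n lam \<and> subpart alpha lam}
           (\<lambda>lam. skew_schur k n lam alpha)"
proof -
  interpret cylindric k n using assms(1) by unfold_locales simp
  note below = fsum_skew_schur_below[OF assms(3)] and above = fsum_skew_schur_above[OF assms(3)]
  have "fsum (cylpars_below alpha) (skew_schur k n alpha) M = fsum (cylpars_above alpha) (\<lambda>l. skew_schur k n l alpha) M"
    for M :: "'a multiset"
    using below[of M] above[of M] walk_count_reverse[OF assms(3), of "rev (letter_counts M)"] by simp
  then show ?thesis
    using below above by (auto simp: fsummable_def cylpars_below_def cylpars_above_def)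
qed

end
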